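(* Let $\mathbf{J}\in\mathbb{R}^{n\times n}$ be a real symmetric matrix with zero diagonal, and let $\alpha,\beta>0$ be such that $\lambda_{\min}(\mathbf{J}+\alpha\mathbf{I})>0$. Let $\{\boldsymbol{x}^{(k)}\}_{k\ge0}$ be the DOCH iterates starting from an arbitrary $\boldsymbol{x}^{(0)}\in\mathbb{R}^n$. Then $\{\boldsymbol{x}^{(k)}\}$ converges to a critical point of $\mathcal{H}$.
   Context: Let $f(\boldsymbol{x})=\frac{\beta}{4}\sum_i x_i^4$, $g(\boldsymbol{x})=\frac12\boldsymbol{x}^\top(\mathbf{J}+\alpha\mathbf{I})\boldsymbol{x}$ and $\mathcal{H}=f-g$ (equivalently $\mathcal{H}(\boldsymbol{x})=\frac{\beta}{4}\sum_i x_i^4-\frac{\alpha}{2}\sum_i x_i^2-\frac12\boldsymbol{x}^\top\mathbf{J}\boldsymbol{x}$). The DOCH iterates are defined by $\boldsymbol{x}^{(k+1)}$ being the minimizer of $F_k(\boldsymbol{x})=f(\boldsymbol{x})-g(\boldsymbol{x}^{(k)})-\nabla g(\boldsymbol{x}^{(k)})^\top(\boldsymbol{x}-\boldsymbol{x}^{(k)})$; explicitly, $\boldsymbol{x}^{(k+1)}=\varphi(\beta^{-1}(\mathbf{J}+\alpha\mathbf{I})\boldsymbol{x}^{(k)})$ with $\varphi$ the componentwise real cube root. A critical point is a point where $\nabla\mathcal{H}=\mathbf{0}$. *)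

theory Defs
  imports "HOL-Analysis.Analysis"
begin

text \<open>Real eigenvalues of a real square matrix, and the minimal eigenvalue
  (meaningful for symmetric matrices, whose eigenvalues are all real).\<close>
definition real_eigenvalue :: "real^'n^'n \<Rightarrow> real \<Rightarrow> bool" where
  "real_eigenvalue A c \<longleftrightarrow> (\<exists>v. v \<noteq> 0 \<and> A *v v = c *\<^sub>R v)"

definition lambda_min :: "real^'n^'n \<Rightarrow> real" where
  "lambda_min A = Min {c. real_eigenvalue A c}"

definition Hfun :: "real^'n^'n \<Rightarrow> real \<Rightarrow> real \<Rightarrow> real^'n \<Rightarrow> real" where
  "Hfun J \<alpha> \<beta> x =
     \<beta> / 4 * (\<Sum>i\<in>UNIV. (x $ i) ^ 4) - \<alpha> / 2 * (\<Sum>i\<in>UNIV. (x $ i) ^ 2)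
     - 1 / 2 * (x \<bullet> (J *v x))"

definition doch_step :: "real^'n^'n \<Rightarrow> real \<Rightarrow> real \<Rightarrow> real^'n \<Rightarrow> real^'n" where
  "doch_step J \<alpha> \<beta> x = (\<chi> i. root 3 ((((J + \<alpha> *\<^sub>R mat 1) *v x) $ i) / \<beta>))"

definition critical_point :: "(real^'n \<Rightarrow> real) \<Rightarrow> real^'n \<Rightarrow> bool" where
  "critical_point H x \<longleftrightarrow> (H has_derivative (\<lambda>h. 0)) (at x)"

end

theory Submission
  imports Defs
begin

(* With A = J + alpha I one has H x = beta/4 * sum_i x_i^4 - 1/2 * x.Ax, and a DOCH step y solves
   beta y_i^3 = (A x)_i.  Convexity of t^4 turns this into the sufficient decrease
   H y <= H x - 1/2 (y - x).A(y - x) <= H x - lambda_min/2 |y - x|^2.  Since H is bounded below and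
   coercive, the iterates stay bounded and their steps are square summable, hence tend to 0.  Every
   limit point p is a fixed point, beta p_i^3 = (A p)_i, which is exactly a critical point of H.
   The fixed points are finitely many: on them x_k^3 is linear in x, so every polynomial function is
   a combination of the monomials with all exponents at most 2, whereas Lagrange polynomials give
   k independent polynomial functions on any k of the points.  A bounded sequence with vanishing
   steps and finitely many limit points converges. *)

section \<open>Symmetric matrices\<close>

lemma symmetric_matrix_inner_commute:
  fixes A :: "real^'n^'n"
  assumes "transpose A = A"
  shows "x \<bullet> (A *v y) = y \<bullet> (A *v x)"
proof -
  have "x \<bullet> (A *v y) = (transpose A *v x) \<bullet> y"
    by (simp add: dot_lmul_matrix)
  then show ?thesis
    by (simp add: assms inner_commute)
qed

lemma mat_scaleR_mult_vector: "(c *\<^sub>R mat 1) *v u = c *\<^sub>R (u :: real^'n)"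
  by (metis matrix_vector_mul_lid scaleR_matrix_vector_assoc)

lemma psd_quadratic_form_eq_0_imp_kernel:
  fixes B :: "real^'n^'n"
  assumes symB: "transpose B = B" and psd: "\<And>u. 0 \<le> u \<bullet> (B *v u)"
    and v: "v \<bullet> (B *v v) = 0"
  shows "B *v v = 0"
proof -
  define w where "w = B *v v"
  define K where "K = w \<bullet> (B *v w)"
  have along_w: "0 \<le> 2 * t * (w \<bullet> w) + t\<^sup>2 * K" for t
  proof -
    have "v \<bullet> (B *v w) = w \<bullet> w"
      using symmetric_matrix_inner_commute[OF symB] by (simp add: w_def)
    moreover have "v \<bullet> w = 0"
      using v by (simp add: w_def)
    ultimately have "(v + t *\<^sub>R w) \<bullet> (B *v (v + t *\<^sub>R w)) = 2 * t * (w \<bullet> w) + t\<^sup>2 * K"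
      by (simp add: K_def matrix_vector_right_distrib matrix_vector_mult_scaleR
          inner_add_left inner_add_right inner_commute power2_eq_square algebra_simps flip: w_def)
    then show ?thesis
      using psd by metis
  qed
  have "K \<ge> 0"
    using psd by (simp add: K_def)
  \<comment> \<open>At \<open>t = - r (w \<bullet> w)\<close> with \<open>r K < 1\<close> the bound is negative unless \<open>w = 0\<close>.\<close>
  define r where "r = 1 / (K + 1)"
  have r: "r > 0" "r * K < 1"
    using \<open>K \<ge> 0\<close> by (simp_all add: r_def field_simps)
  have "2 * (- r * (w \<bullet> w)) * (w \<bullet> w) + (- r * (w \<bullet> w))\<^sup>2 * K
      = r * ((w \<bullet> w)\<^sup>2 * (r * K - 2))"
    by (simp add: algebra_simps power2_eq_square)
  then have "0 \<le> r * ((w \<bullet> w)\<^sup>2 * (r * K - 2))"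
    using along_w[of "- r * (w \<bullet> w)"] by (simp only:)
  with r have "w \<bullet> w = 0"
    by (auto simp: zero_le_mult_iff)
  then show ?thesis
    by (simp add: w_def)
qed

lemma transpose_add: "transpose (A + B) = transpose A + transpose (B :: 'a::semiring_1^'n^'m)"
  by (simp add: transpose_def vec_eq_iff)

lemma finite_real_eigenvalues:
  fixes A :: "real^'n^'n"
  assumes symA: "transpose A = A"
  shows "finite {c. real_eigenvalue A c}"
proof -
  define E where "E = {c. real_eigenvalue A c}"
  have "\<forall>c\<in>E. \<exists>u. u \<noteq> 0 \<and> A *v u = c *\<^sub>R u"
    unfolding E_def real_eigenvalue_def by blast
  then obtain ev where ev: "\<And>c. c \<in> E \<Longrightarrow> ev c \<noteq> 0 \<and> A *v ev c = c *\<^sub>R ev c"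
    by metis
  have orth: "ev c \<bullet> ev d = 0" if "c \<in> E" "d \<in> E" "c \<noteq> d" for c d
  proof -
    have "c * (ev c \<bullet> ev d) = ev d \<bullet> (A *v ev c)"
      using ev[OF that(1)] by (simp add: inner_commute)
    also have "\<dots> = ev c \<bullet> (A *v ev d)"
      by (rule symmetric_matrix_inner_commute[OF symA])
    also have "\<dots> = d * (ev c \<bullet> ev d)"
      using ev[OF that(2)] by simp
    finally show ?thesis
      using that(3) by simp
  qed
  have inj: "inj_on ev E"
  proof (rule inj_onI)
    fix c d assume cd: "c \<in> E" "d \<in> E" "ev c = ev d"
    then have "c *\<^sub>R ev c = d *\<^sub>R ev c"
      using ev[OF cd(1)] ev[OF cd(2)] by metis
    then show "c = d"
      using ev[OF cd(1)] by simp
  qed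
  have "pairwise orthogonal (ev ` E)"
    unfolding pairwise_def orthogonal_def using orth by fastforce
  moreover have "0 \<notin> ev ` E"
    using ev by fastforce
  ultimately have "independent (ev ` E)"
    by (rule pairwise_orthogonal_independent)
  then have "finite (ev ` E)"
    using independent_bound by blast
  then show ?thesis
    using finite_image_iff[OF inj] by (simp add: E_def)
qed

lemma lambda_min_le_quadratic_form:
  fixes A :: "real^'n^'n"
  assumes symA: "transpose A = A"
  shows "lambda_min A * (norm u)\<^sup>2 \<le> u \<bullet> (A *v u)"
proof -
  have "continuous_on UNIV ((*v) A)"
    by (rule linear_continuous_on[OF matrix_vector_mul_bounded_linear])
  then have "continuous_on (sphere 0 1) (\<lambda>u. u \<bullet> (A *v u))"
    using continuous_on_inner[OF continuous_on_id] continuous_on_subset by blast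
  moreover have "sphere (0::real^'n) 1 \<noteq> {}"
    by simp
  ultimately obtain v where v: "v \<in> sphere 0 1"
    and v_min: "\<And>y. y \<in> sphere 0 1 \<Longrightarrow> v \<bullet> (A *v v) \<le> y \<bullet> (A *v y)"
    using continuous_attains_inf[OF compact_sphere] by blast
  define c where "c = v \<bullet> (A *v v)"
  have c_le: "c * (norm y)\<^sup>2 \<le> y \<bullet> (A *v y)" for y
  proof (cases "y = 0")
    case False
    then have "(1 / norm y) *\<^sub>R y \<in> sphere 0 1"
      by simp
    then have "c \<le> ((1 / norm y) *\<^sub>R y) \<bullet> (A *v ((1 / norm y) *\<^sub>R y))"
      unfolding c_def by (rule v_min)
    also have "\<dots> = (1 / norm y)\<^sup>2 * (y \<bullet> (A *v y))"
      by (simp add: matrix_vector_mult_scaleR power2_eq_square)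
    finally have "c \<le> (1 / norm y)\<^sup>2 * (y \<bullet> (A *v y))" .
    then show ?thesis
      using False by (simp add: field_simps power2_eq_square)
  qed simp
  define B where "B = A - c *\<^sub>R mat 1"
  have B_mult: "B *v y = A *v y - c *\<^sub>R y" for y
    by (simp add: B_def matrix_vector_mult_diff_rdistrib mat_scaleR_mult_vector)
  have "B *v v = 0"
  proof (rule psd_quadratic_form_eq_0_imp_kernel)
    show "transpose B = B"
      using symA by (simp add: B_def transpose_def mat_def vec_eq_iff)
    show "0 \<le> y \<bullet> (B *v y)" for y
      using c_le[of y] by (simp add: B_mult inner_diff_right dot_square_norm)
    show "v \<bullet> (B *v v) = 0"
      using v by (simp add: B_mult inner_diff_right dot_square_norm c_def)
  qed
  then have "real_eigenvalue A c"
    using v unfolding real_eigenvalue_def by (intro exI[of _ v]) (auto simp: B_mult)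
  then have "lambda_min A \<le> c"
    unfolding lambda_min_def using finite_real_eigenvalues[OF symA] by simp
  then have "lambda_min A * (norm u)\<^sup>2 \<le> c * (norm u)\<^sup>2"
    by (simp add: mult_right_mono)
  also have "\<dots> \<le> u \<bullet> (A *v u)"
    by (rule c_le)
  finally show ?thesis .
qed

section \<open>The quartic energy\<close>

definition quartic_energy :: "real \<Rightarrow> real^'n^'n \<Rightarrow> real^'n \<Rightarrow> real" where
  "quartic_energy \<beta> A x = \<beta> / 4 * (\<Sum>i\<in>UNIV. (x $ i) ^ 4) - 1 / 2 * (x \<bullet> (A *v x))"

lemma Hfun_eq_quartic_energy:
  fixes J :: "real^'n^'n"
  shows "Hfun J \<alpha> \<beta> = quartic_energy \<beta> (J + \<alpha> *\<^sub>R mat 1)"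
proof
  fix x :: "real^'n"
  have "x \<bullet> x = (\<Sum>i\<in>UNIV. (x $ i)\<^sup>2)"
    by (simp add: inner_vec_def power2_eq_square)
  then have "x \<bullet> ((J + \<alpha> *\<^sub>R mat 1) *v x) = x \<bullet> (J *v x) + \<alpha> * (\<Sum>i\<in>UNIV. (x $ i)\<^sup>2)"
    by (simp add: matrix_vector_mult_add_rdistrib mat_scaleR_mult_vector inner_add_right)
  then show "Hfun J \<alpha> \<beta> x = quartic_energy \<beta> (J + \<alpha> *\<^sub>R mat 1) x"
    by (simp add: Hfun_def quartic_energy_def algebra_simps)
qed

lemma fourth_power_tangent_le: "y ^ 4 + 4 * y ^ 3 * (x - y) \<le> (x :: real) ^ 4"
proof -
  have "x ^ 4 - (y ^ 4 + 4 * y ^ 3 * (x - y)) = (x - y)\<^sup>2 * (2 * y\<^sup>2 + (x + y)\<^sup>2)"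
    by (simp add: algebra_simps power2_eq_square power3_eq_cube power4_eq_xxxx)
  moreover have "0 \<le> (x - y)\<^sup>2 * (2 * y\<^sup>2 + (x + y)\<^sup>2)"
    by simp
  ultimately show ?thesis
    by linarith
qed

lemma quartic_energy_descent:
  fixes A :: "real^'n^'n"
  assumes symA: "transpose A = A" and "\<beta> > 0"
    and y: "\<And>i. \<beta> * (y $ i) ^ 3 = (A *v x) $ i"
  shows "quartic_energy \<beta> A y \<le> quartic_energy \<beta> A x - 1 / 2 * ((y - x) \<bullet> (A *v (y - x)))"
proof -
  have "\<beta> / 4 * (\<Sum>i\<in>UNIV. (y $ i) ^ 4) - \<beta> / 4 * (\<Sum>i\<in>UNIV. (x $ i) ^ 4)
      = (\<Sum>i\<in>UNIV. \<beta> / 4 * ((y $ i) ^ 4 - (x $ i) ^ 4))"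
    by (simp add: sum_distrib_left sum_subtractf algebra_simps)
  also have "\<dots> \<le> (\<Sum>i\<in>UNIV. \<beta> / 4 * (4 * (y $ i) ^ 3 * (y $ i - x $ i)))"
    using fourth_power_tangent_le[of "y $ _" "x $ _"] \<open>\<beta> > 0\<close>
    by (intro sum_mono mult_left_mono) (auto simp: algebra_simps)
  also have "\<dots> = (y - x) \<bullet> (A *v x)"
    by (simp add: y[symmetric] inner_vec_def mult_ac)
  finally have quartic: "\<beta> / 4 * (\<Sum>i\<in>UNIV. (y $ i) ^ 4) - \<beta> / 4 * (\<Sum>i\<in>UNIV. (x $ i) ^ 4)
      \<le> (y - x) \<bullet> (A *v x)" .
  have "x \<bullet> (A *v y) = y \<bullet> (A *v x)"
    by (rule symmetric_matrix_inner_commute[OF symA])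
  with quartic show ?thesis
    by (simp add: quartic_energy_def matrix_vector_mult_diff_distrib inner_diff_left
        inner_diff_right algebra_simps)
qed

lemma quartic_energy_has_derivative:
  fixes A :: "real^'n^'n"
  assumes symA: "transpose A = A"
  shows "(quartic_energy \<beta> A has_derivative (\<lambda>h. h \<bullet> ((\<chi> i. \<beta> * (x $ i) ^ 3) - A *v x))) (at x)"
  unfolding quartic_energy_def
proof (rule has_derivative_eq_rhs)
  show "((\<lambda>x. \<beta> / 4 * (\<Sum>i\<in>UNIV. (x $ i) ^ 4) - 1 / 2 * (x \<bullet> (A *v x))) has_derivative
      (\<lambda>h. \<beta> / 4 * (\<Sum>i\<in>UNIV. 4 * h $ i * (x $ i) ^ 3) - 1 / 2 * (x \<bullet> (A *v h) + h \<bullet> (A *v x))))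
      (at x)"
    by (rule derivative_eq_intros bounded_linear.has_derivative[OF bounded_linear_vec_nth]
        bounded_linear.has_derivative[OF matrix_vector_mul_bounded_linear]
        has_derivative_ident refl | simp)+
  show "(\<lambda>h. \<beta> / 4 * (\<Sum>i\<in>UNIV. 4 * h $ i * (x $ i) ^ 3) - 1 / 2 * (x \<bullet> (A *v h) + h \<bullet> (A *v x)))
      = (\<lambda>h. h \<bullet> ((\<chi> i. \<beta> * (x $ i) ^ 3) - A *v x))"
  proof
    fix h
    have "x \<bullet> (A *v h) = h \<bullet> (A *v x)"
      by (rule symmetric_matrix_inner_commute[OF symA])
    moreover have "h \<bullet> (\<chi> i. \<beta> * (x $ i) ^ 3) = (\<Sum>i\<in>UNIV. \<beta> * (h $ i * (x $ i) ^ 3))"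
      by (simp add: inner_vec_def mult_ac)
    ultimately show "\<beta> / 4 * (\<Sum>i\<in>UNIV. 4 * h $ i * (x $ i) ^ 3) - 1 / 2 * (x \<bullet> (A *v h) + h \<bullet> (A *v x))
        = h \<bullet> ((\<chi> i. \<beta> * (x $ i) ^ 3) - A *v x)"
      by (simp add: inner_diff_right sum_distrib_left mult_ac)
  qed
qed

lemma critical_point_quartic_energy:
  fixes A :: "real^'n^'n"
  assumes "transpose A = A" and p: "\<And>i. \<beta> * (p $ i) ^ 3 = (A *v p) $ i"
  shows "critical_point (quartic_energy \<beta> A) p"
proof -
  have "(\<chi> i. \<beta> * (p $ i) ^ 3) = A *v p"
    by (simp add: p vec_eq_iff)
  then show ?thesis
    using quartic_energy_has_derivative[OF assms(1), of \<beta> p]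
    by (simp add: critical_point_def)
qed

lemma norm_pow_4_le_card_sum_pow_4:
  fixes x :: "real^'n"
  shows "(norm x) ^ 4 \<le> real CARD('n) * (\<Sum>i\<in>UNIV. (x $ i) ^ 4)"
proof -
  have "(norm x)\<^sup>2 = (\<Sum>i\<in>UNIV. (x $ i)\<^sup>2)"
    by (simp only: power2_norm_eq_inner) (simp add: inner_vec_def power2_eq_square)
  then have "(norm x) ^ 4 = (\<Sum>i\<in>UNIV. (x $ i)\<^sup>2)\<^sup>2"
    by (metis numeral_Bit0 power_add power2_eq_square)
  also have "\<dots> \<le> (\<Sum>i\<in>UNIV. ((x $ i)\<^sup>2)\<^sup>2) * real CARD('n)"
    by (rule sum_squared_le_sum_of_squares)
  finally show ?thesis
    by (simp add: mult.commute flip: power_mult)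
qed

lemma quadratic_ge_neg_discriminant:
  fixes a b s :: real
  assumes "a > 0"
  shows "- (b\<^sup>2 / (4 * a)) \<le> a * s\<^sup>2 - b * s"
proof -
  have "a * s\<^sup>2 - b * s + b\<^sup>2 / (4 * a) = (2 * a * s - b)\<^sup>2 / (4 * a)"
    using assms by (simp add: field_simps power2_eq_square)
  moreover have "0 \<le> (2 * a * s - b)\<^sup>2 / (4 * a)"
    using assms by simp
  ultimately show ?thesis
    by linarith
qed

lemma quadratic_sublevel_bound:
  fixes a b s M :: real
  assumes "a > 0" "s \<ge> 0" "a * s\<^sup>2 - b * s \<le> M"
  shows "s \<le> max 1 ((\<bar>b\<bar> + \<bar>M\<bar> + 1) / a)"
proof (rule ccontr)
  assume "\<not> ?thesis"
  then have "s > 1" "s > (\<bar>b\<bar> + \<bar>M\<bar> + 1) / a"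
    by auto
  moreover from this(2) have "a * s - b > \<bar>M\<bar> + 1"
    using \<open>a > 0\<close> abs_ge_self[of b] by (simp add: field_simps)
  ultimately have "s * (a * s - b) > 1 * (\<bar>M\<bar> + 1)"
    by (intro mult_strict_mono) auto
  with assms(3) show False
    by (simp add: power2_eq_square algebra_simps)
qed

lemma quartic_energy_ge_quadratic_in_norm_square:
  fixes A :: "real^'n^'n"
  assumes "\<beta> > 0"
  obtains K where "\<And>x. \<beta> / (4 * CARD('n)) * ((norm x)\<^sup>2)\<^sup>2 - K * (norm x)\<^sup>2 \<le> quartic_energy \<beta> A x"
proof -
  obtain K where K: "\<And>u. norm (A *v u) \<le> norm u * K"
    using bounded_linear.bounded[OF matrix_vector_mul_bounded_linear] by blast
  have "\<beta> / (4 * CARD('n)) * ((norm x)\<^sup>2)\<^sup>2 - K / 2 * (norm x)\<^sup>2 \<le> quartic_energy \<beta> A x" for x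
  proof -
    have "x \<bullet> (A *v x) \<le> norm x * norm (A *v x)"
      by (rule norm_cauchy_schwarz)
    also have "\<dots> \<le> K * (norm x)\<^sup>2"
      using mult_left_mono[OF K[of x] norm_ge_zero[of x]] by (simp add: power2_eq_square mult_ac)
    finally have quadratic: "x \<bullet> (A *v x) \<le> K * (norm x)\<^sup>2" .
    have "\<beta> / (4 * CARD('n)) * ((norm x)\<^sup>2)\<^sup>2 \<le> \<beta> / 4 * (\<Sum>i\<in>UNIV. (x $ i) ^ 4)"
      using norm_pow_4_le_card_sum_pow_4[of x] \<open>\<beta> > 0\<close>
      by (simp add: field_simps flip: power_mult)
    with quadratic show ?thesis
      by (simp add: quartic_energy_def)
  qed
  then show ?thesis
    by (rule that)
qed

lemma quartic_energy_bounded_below: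
  fixes A :: "real^'n^'n"
  assumes "\<beta> > 0"
  obtains L where "\<And>x. L \<le> quartic_energy \<beta> A x"
proof -
  obtain K where K: "\<And>x. \<beta> / (4 * CARD('n)) * ((norm x)\<^sup>2)\<^sup>2 - K * (norm x)\<^sup>2 \<le> quartic_energy \<beta> A x"
    using quartic_energy_ge_quadratic_in_norm_square[OF assms] by blast
  have "\<beta> / (4 * CARD('n)) > 0"
    using assms by simp
  then show ?thesis
    using quadratic_ge_neg_discriminant K order_trans by (intro that) blast
qed

lemma bounded_quartic_energy_sublevel:
  fixes A :: "real^'n^'n"
  assumes "\<beta> > 0"
  shows "bounded {x. quartic_energy \<beta> A x \<le> M}"
proof -
  obtain K where K: "\<And>x. \<beta> / (4 * CARD('n)) * ((norm x)\<^sup>2)\<^sup>2 - K * (norm x)\<^sup>2 \<le> quartic_energy \<beta> A x"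
    using quartic_energy_ge_quadratic_in_norm_square[OF assms] by blast
  define R where "R = max 1 ((\<bar>K\<bar> + \<bar>M\<bar> + 1) / (\<beta> / (4 * CARD('n))))"
  have "norm x \<le> sqrt R" if "quartic_energy \<beta> A x \<le> M" for x
  proof (rule real_le_rsqrt)
    show "(norm x)\<^sup>2 \<le> R"
      unfolding R_def using assms K[of x] that
      by (intro quadratic_sublevel_bound) auto
  qed
  then show ?thesis
    unfolding bounded_iff by blast
qed

section \<open>Finiteness of the fixed-point set\<close>

definition monomial_vec :: "('n \<Rightarrow> nat) \<Rightarrow> real^'n \<Rightarrow> real" where
  "monomial_vec e x = (\<Prod>i\<in>UNIV. (x $ i) ^ e i)"

(* A pair of boolean vectors encodes the exponent vector counting its true entries; this covers
   every exponent vector with entries at most 2, and the redundancy does no harm. *)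
type_synonym 'n reduced_index = "('n \<Rightarrow> bool) \<times> ('n \<Rightarrow> bool)"

definition reduced_exponent :: "'n reduced_index \<Rightarrow> 'n \<Rightarrow> nat" where
  "reduced_exponent m i = of_bool (fst m i) + of_bool (snd m i)"

definition reduced_monomials :: "real^'n \<Rightarrow> real^('n reduced_index)" where
  "reduced_monomials x = (\<chi> m. monomial_vec (reduced_exponent m) x)"

definition reduced_poly_on :: "(real^'n) set \<Rightarrow> (real^'n \<Rightarrow> real) \<Rightarrow> bool" where
  "reduced_poly_on S f \<longleftrightarrow> (\<exists>w. \<forall>x\<in>S. f x = w \<bullet> reduced_monomials x)"

lemma monomial_vec_add_exponent:
  "monomial_vec (e(k := e k + d)) x = (x $ k) ^ d * monomial_vec e x"
proof -
  have "monomial_vec (e(k := e k + d)) x = (\<Prod>i\<in>UNIV. (if i = k then (x $ k) ^ d else 1) * (x $ i) ^ e i)"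
    unfolding monomial_vec_def by (rule prod.cong) (auto simp: power_add)
  then show ?thesis
    by (simp add: prod.distrib monomial_vec_def)
qed

lemma sum_add_exponent:
  fixes e :: "'n::finite \<Rightarrow> nat"
  shows "(\<Sum>i\<in>UNIV. (e(k := e k + d)) i) = (\<Sum>i\<in>UNIV. e i) + d"
proof -
  have "(\<Sum>i\<in>UNIV. (e(k := e k + d)) i) = (\<Sum>i\<in>UNIV. e i + (if i = k then d else 0))"
    by (rule sum.cong) auto
  then show ?thesis
    by (simp add: sum.distrib)
qed

lemma reduced_poly_on_cong:
  "(\<And>x. x \<in> S \<Longrightarrow> f x = g x) \<Longrightarrow> reduced_poly_on S g \<Longrightarrow> reduced_poly_on S f"
  unfolding reduced_poly_on_def by auto

lemma reduced_poly_on_add: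
  "reduced_poly_on S f \<Longrightarrow> reduced_poly_on S g \<Longrightarrow> reduced_poly_on S (\<lambda>x. f x + g x)"
  unfolding reduced_poly_on_def by (metis inner_add_left)

lemma reduced_poly_on_cmult: "reduced_poly_on S f \<Longrightarrow> reduced_poly_on S (\<lambda>x. c * f x)"
  unfolding reduced_poly_on_def by (metis inner_scaleR_left)

lemma reduced_poly_on_sum:
  "finite T \<Longrightarrow> (\<And>t. t \<in> T \<Longrightarrow> reduced_poly_on S (f t)) \<Longrightarrow> reduced_poly_on S (\<lambda>x. \<Sum>t\<in>T. f t x)"
proof (induction T rule: finite_induct)
  case empty
  then show ?case
    unfolding reduced_poly_on_def by (metis inner_zero_left sum.empty)
next
  case (insert t T)
  then show ?case
    by (simp add: reduced_poly_on_add)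
qed

lemma reduced_poly_on_reduced_monomial: "reduced_poly_on S (monomial_vec (reduced_exponent m))"
  unfolding reduced_poly_on_def
  by (rule exI[of _ "axis m 1"]) (simp add: reduced_monomials_def inner_axis')

lemma reduced_poly_on_const: "reduced_poly_on S (\<lambda>x. c)"
proof -
  have "reduced_poly_on S (\<lambda>x. c * monomial_vec (reduced_exponent (\<lambda>_. False, \<lambda>_. False)) x)"
    by (intro reduced_poly_on_cmult reduced_poly_on_reduced_monomial)
  then show ?thesis
    by (rule reduced_poly_on_cong[rotated]) (simp add: monomial_vec_def reduced_exponent_def)
qed

lemma reduced_poly_on_mult_coord:
  assumes monomials: "\<And>e. reduced_poly_on S (monomial_vec e)" and f: "reduced_poly_on S f"
  shows "reduced_poly_on S (\<lambda>x. x $ k * f x)"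
proof -
  obtain w where w: "\<And>x. x \<in> S \<Longrightarrow> f x = w \<bullet> reduced_monomials x"
    using f unfolding reduced_poly_on_def by blast
  let ?e = "\<lambda>m. (reduced_exponent m)(k := reduced_exponent m k + 1)"
  have "reduced_poly_on S (\<lambda>x. \<Sum>m\<in>UNIV. w $ m * monomial_vec (?e m) x)"
    by (intro reduced_poly_on_sum reduced_poly_on_cmult monomials) simp
  moreover have "x $ k * f x = (\<Sum>m\<in>UNIV. w $ m * monomial_vec (?e m) x)" if "x \<in> S" for x
  proof -
    have "x $ k * f x = (\<Sum>m\<in>UNIV. w $ m * (x $ k * monomial_vec (reduced_exponent m) x))"
      by (simp add: w[OF that] inner_vec_def reduced_monomials_def sum_distrib_left mult_ac)
    then show ?thesis
      by (simp only: monomial_vec_add_exponent power_one_right)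
  qed
  ultimately show ?thesis
    by (rule reduced_poly_on_cong[rotated])
qed

lemma reduced_poly_on_prod_affine:
  assumes monomials: "\<And>e. reduced_poly_on S (monomial_vec e)" and "finite T"
  shows "reduced_poly_on S (\<lambda>x. \<Prod>t\<in>T. (x $ k t - c t) / d t)"
  using \<open>finite T\<close>
proof (induction T rule: finite_induct)
  case empty
  then show ?case
    by (simp add: reduced_poly_on_const)
next
  case (insert t T)
  let ?g = "\<lambda>x. \<Prod>t\<in>T. (x $ k t - c t) / d t"
  have "reduced_poly_on S (\<lambda>x. 1 / d t * (x $ k t * ?g x) + (- c t / d t) * ?g x)"
    by (intro reduced_poly_on_add reduced_poly_on_cmult reduced_poly_on_mult_coord monomials insert.IH)
  then show ?case
    by (rule reduced_poly_on_cong[rotated])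
      (use insert.hyps in \<open>simp add: diff_divide_distrib left_diff_distrib\<close>)
qed

lemma reduced_poly_on_cubic_variety_monomial:
  fixes M :: "real^'n^'n"
  assumes "b \<noteq> 0"
  shows "reduced_poly_on {p. \<forall>i. b * (p $ i) ^ 3 = (M *v p) $ i} (monomial_vec e)"
proof (induction "\<Sum>i\<in>UNIV. e i" arbitrary: e rule: less_induct)
  case less
  let ?C = "{p. \<forall>i. b * (p $ i) ^ 3 = (M *v p) $ i}"
  show ?case
  proof (cases "\<exists>k. 3 \<le> e k")
    case False
    define m where "m = (\<lambda>i. 1 \<le> e i, \<lambda>i. 2 \<le> e i)"
    have "e i = reduced_exponent m i" for i
    proof -
      have "e i < 3"
        using False by (simp add: not_le)
      then consider "e i = 0" | "e i = 1" | "e i = 2"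
        by linarith
      then show ?thesis
        by cases (simp_all add: reduced_exponent_def m_def)
    qed
    then have "e = reduced_exponent m"
      by blast
    then show ?thesis
      by (simp add: reduced_poly_on_reduced_monomial)
  next
    case True
    \<comment> \<open>On the variety \<open>x_k^3\<close> is linear in \<open>x\<close>, so the degree drops by 2.\<close>
    then obtain k where "3 \<le> e k"
      by blast
    define e' where "e' = e(k := e k - 3)"
    have e: "e = e'(k := e' k + 3)"
      using \<open>3 \<le> e k\<close> by (auto simp: e'_def fun_eq_iff)
    have degree: "(\<Sum>i\<in>UNIV. e i) = (\<Sum>i\<in>UNIV. e' i) + 3"
      by (subst e) (rule sum_add_exponent)
    have "reduced_poly_on ?C (\<lambda>x. \<Sum>j\<in>UNIV. M $ k $ j / b * monomial_vec (e'(j := e' j + 1)) x)"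
    proof (intro reduced_poly_on_sum reduced_poly_on_cmult less)
      show "(\<Sum>i\<in>UNIV. (e'(j := e' j + 1)) i) < (\<Sum>i\<in>UNIV. e i)" for j
        by (simp only: degree sum_add_exponent)
    qed simp
    moreover have "monomial_vec e x = (\<Sum>j\<in>UNIV. M $ k $ j / b * monomial_vec (e'(j := e' j + 1)) x)"
      if "x \<in> ?C" for x
    proof -
      have "(\<Sum>j\<in>UNIV. M $ k $ j / b * x $ j) = (M *v x) $ k / b"
        by (simp add: matrix_vector_mult_def sum_divide_distrib mult_ac)
      also have "\<dots> = (x $ k) ^ 3"
      proof -
        have "(M *v x) $ k = b * (x $ k) ^ 3"
          using that by simp
        with \<open>b \<noteq> 0\<close> show ?thesis
          by simp
      qed
      finally have cube: "(x $ k) ^ 3 = (\<Sum>j\<in>UNIV. M $ k $ j / b * x $ j)" ..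
      have "monomial_vec e x = (x $ k) ^ 3 * monomial_vec e' x"
        by (subst e) (rule monomial_vec_add_exponent)
      also have "\<dots> = (\<Sum>j\<in>UNIV. M $ k $ j / b * (x $ j * monomial_vec e' x))"
        by (simp add: cube sum_distrib_right mult.assoc)
      also have "\<dots> = (\<Sum>j\<in>UNIV. M $ k $ j / b * monomial_vec (e'(j := e' j + 1)) x)"
        by (simp only: monomial_vec_add_exponent power_one_right)
      finally show ?thesis .
    qed
    ultimately show ?thesis
      by (rule reduced_poly_on_cong[rotated])
  qed
qed

lemma card_le_DIM_if_biorthogonal:
  fixes v w :: "'a \<Rightarrow> 'b::euclidean_space"
  assumes "finite S" and biorth: "\<And>a b. a \<in> S \<Longrightarrow> b \<in> S \<Longrightarrow> w a \<bullet> v b = (if a = b then 1 else 0)"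
  shows "card S \<le> DIM('b)"
proof -
  have inj: "inj_on v S"
    by (rule inj_onI) (metis biorth zero_neq_one)
  have "independent (v ` S)"
  proof (rule independent_if_scalars_zero)
    show "finite (v ` S)"
      using \<open>finite S\<close> by simp
    fix f y
    assume zero: "(\<Sum>z\<in>v ` S. f z *\<^sub>R z) = 0" and "y \<in> v ` S"
    then obtain a where a: "a \<in> S" "y = v a"
      by blast
    have "0 = w a \<bullet> (\<Sum>z\<in>v ` S. f z *\<^sub>R z)"
      by (simp add: zero)
    also have "\<dots> = (\<Sum>c\<in>S. f (v c) * (w a \<bullet> v c))"
      by (simp add: inner_sum_right sum.reindex[OF inj])
    also have "\<dots> = (\<Sum>c\<in>S. if c = a then f y else 0)"
      by (rule sum.cong) (auto simp: a biorth)
    also have "\<dots> = f y"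
      using a \<open>finite S\<close> by simp
    finally show "f y = 0" ..
  qed
  then have "card (v ` S) \<le> DIM('b)"
    using independent_bound by blast
  then show ?thesis
    by (simp add: card_image[OF inj])
qed

lemma finite_cubic_variety:
  fixes M :: "real^'n^'n"
  assumes "b \<noteq> 0"
  shows "finite {p. \<forall>i. b * (p $ i) ^ 3 = (M *v p) $ i}" (is "finite ?C")
proof -
  have card_le: "card S \<le> CARD('n reduced_index)" if "finite S" "S \<subseteq> ?C" for S
  proof -
    have "\<forall>a q. \<exists>i. a \<noteq> q \<longrightarrow> a $ i \<noteq> q $ i"
      by (simp add: vec_eq_iff)
    then obtain coord :: "real^'n \<Rightarrow> real^'n \<Rightarrow> 'n"
      where coord: "\<And>a q. a \<noteq> q \<Longrightarrow> a $ coord a q \<noteq> q $ coord a q"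
      by metis
    define lagrange :: "real^'n \<Rightarrow> real^'n \<Rightarrow> real" where "lagrange a x =
      (\<Prod>q\<in>S - {a}. (x $ coord a q - q $ coord a q) / (a $ coord a q - q $ coord a q))" for a x
    have "reduced_poly_on ?C (lagrange a)" for a
      unfolding lagrange_def using \<open>finite S\<close>
      by (intro reduced_poly_on_prod_affine reduced_poly_on_cubic_variety_monomial assms) simp
    then have "\<forall>a. \<exists>w. \<forall>x\<in>?C. lagrange a x = w \<bullet> reduced_monomials x"
      unfolding reduced_poly_on_def by blast
    from choice[OF this] obtain w
      where w: "\<forall>a. \<forall>x\<in>?C. lagrange a x = w a \<bullet> reduced_monomials x"
      by blast
    have "w a \<bullet> reduced_monomials q = (if a = q then 1 else 0)" if "a \<in> S" "q \<in> S" for a q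
    proof -
      have "lagrange a a = 1"
        unfolding lagrange_def using coord by (intro prod.neutral) auto
      moreover have "lagrange a q = 0" if "q \<noteq> a"
        unfolding lagrange_def using \<open>finite S\<close> \<open>q \<in> S\<close> that by (subst prod_zero_iff) auto
      ultimately show ?thesis
        using that \<open>S \<subseteq> ?C\<close> w by auto
    qed
    then have "card S \<le> DIM(real^'n reduced_index)"
      using card_le_DIM_if_biorthogonal[OF \<open>finite S\<close>] by blast
    then show ?thesis
      by simp
  qed
  show ?thesis
  proof (rule ccontr)
    assume "infinite ?C"
    then obtain S where "finite S" "card S = CARD('n reduced_index) + 1" "S \<subseteq> ?C"
      using infinite_arbitrarily_large by blast
    with card_le show False
      by fastforce
  qed
qed

section \<open>Sequences with vanishing steps\<close>

lemma finite_set_separated: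
  fixes C :: "'a::metric_space set"
  assumes "finite C"
  shows "\<exists>\<delta>>0. \<forall>p\<in>C. \<forall>q\<in>C. p \<noteq> q \<longrightarrow> \<delta> \<le> dist p q"
  using assms
proof (induction C rule: finite_induct)
  case empty
  show ?case
    using zero_less_one by blast
next
  case (insert a C)
  obtain \<delta> where "\<delta> > 0" and \<delta>: "\<forall>p\<in>C. \<forall>q\<in>C. p \<noteq> q \<longrightarrow> \<delta> \<le> dist p q"
    using insert.IH by blast
  obtain \<delta>' where "\<delta>' > 0" and \<delta>': "\<forall>q\<in>C. q \<noteq> a \<longrightarrow> \<delta>' \<le> dist a q"
    using finite_set_avoid[OF insert.hyps(1)] by blast
  have "\<forall>p\<in>insert a C. \<forall>q\<in>insert a C. p \<noteq> q \<longrightarrow> min \<delta> \<delta>' \<le> dist p q"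
    using \<delta> \<delta>' by (auto simp: dist_commute intro: min.coboundedI1 min.coboundedI2)
  with \<open>\<delta> > 0\<close> \<open>\<delta>' > 0\<close> show ?case
    by (metis min_less_iff_conj)
qed

lemma eventually_near_limit_points:
  fixes x :: "nat \<Rightarrow> 'a::heine_borel"
  assumes "bounded (range x)"
    and lim: "\<And>r p. strict_mono r \<Longrightarrow> (x \<circ> r) \<longlonglongrightarrow> p \<Longrightarrow> p \<in> C"
    and "e > 0"
  shows "eventually (\<lambda>k. \<exists>p\<in>C. dist (x k) p < e) sequentially"
proof (rule ccontr)
  define T where "T = {k. \<not> (\<exists>p\<in>C. dist (x k) p < e)}"
  assume "\<not> ?thesis"
  then have "infinite T"
    unfolding T_def eventually_sequentially infinite_nat_iff_unbounded_le by auto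
  then obtain r :: "nat \<Rightarrow> nat" where r: "strict_mono r" "\<And>n. r n \<in> T"
    using infinite_enumerate by metis
  have "bounded (range (x \<circ> r))"
    using \<open>bounded (range x)\<close> by (rule bounded_subset) auto
  then obtain l r' where r': "strict_mono r'" "((x \<circ> r) \<circ> r') \<longlonglongrightarrow> l"
    using bounded_imp_convergent_subsequence by blast
  have "l \<in> C"
    using lim[OF strict_mono_o[OF r(1) r'(1)]] r'(2) by (simp add: o_assoc)
  moreover have "eventually (\<lambda>j. dist (((x \<circ> r) \<circ> r') j) l < e) sequentially"
    using r'(2) \<open>e > 0\<close> by (rule tendstoD)
  ultimately show False
    using r(2) by (auto simp: T_def)
qed

lemma convergent_if_finite_limit_points:
  fixes x :: "nat \<Rightarrow> 'a::{heine_borel, real_normed_vector}"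
  assumes bounded: "bounded (range x)" and steps: "(\<lambda>k. x (Suc k) - x k) \<longlonglongrightarrow> 0"
    and "finite C"
    and lim: "\<And>r p. strict_mono r \<Longrightarrow> (x \<circ> r) \<longlonglongrightarrow> p \<Longrightarrow> p \<in> C"
  shows "\<exists>p. x \<longlonglongrightarrow> p"
proof -
  obtain \<delta> where "\<delta> > 0" and sep: "\<And>p q. p \<in> C \<Longrightarrow> q \<in> C \<Longrightarrow> p \<noteq> q \<Longrightarrow> \<delta> \<le> dist p q"
    using finite_set_separated[OF \<open>finite C\<close>] by blast
  have trapped: "\<exists>p\<in>C. eventually (\<lambda>k. dist (x k) p < e) sequentially"
    if "e > 0" "3 * e \<le> \<delta>" for e
  proof -
    have "eventually (\<lambda>k. \<exists>p\<in>C. dist (x k) p < e) sequentially"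
      using bounded lim \<open>e > 0\<close> by (rule eventually_near_limit_points)
    then have "eventually (\<lambda>k. (\<exists>p\<in>C. dist (x k) p < e) \<and> dist (x (Suc k)) (x k) < e) sequentially"
      using tendstoD[OF steps \<open>e > 0\<close>]
      by eventually_elim (simp add: dist_norm)
    then obtain N where N: "\<And>k. k \<ge> N \<Longrightarrow> (\<exists>p\<in>C. dist (x k) p < e) \<and> dist (x (Suc k)) (x k) < e"
      unfolding eventually_sequentially by blast
    then obtain p where "p \<in> C" "dist (x N) p < e"
      by blast
    have "dist (x k) p < e" if "k \<ge> N" for k
      using that
    proof (induction k rule: dec_induct)
      case base
      show ?case
        by fact
    next
      case (step k)
      obtain q where "q \<in> C" "dist (x (Suc k)) q < e"
        using N step.hyps by (meson le_Suc_eq)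
      moreover have "dist (x (Suc k)) (x k) < e"
        using N step.hyps by blast
      ultimately have "dist p q < \<delta>"
        using step.IH \<open>3 * e \<le> \<delta>\<close> by (smt (verit) dist_commute dist_triangle)
      then show ?case
        using sep \<open>p \<in> C\<close> \<open>q \<in> C\<close> \<open>dist (x (Suc k)) q < e\<close> by force
    qed
    then show ?thesis
      using \<open>p \<in> C\<close> unfolding eventually_sequentially by blast
  qed
  obtain p where "p \<in> C" and p: "eventually (\<lambda>k. dist (x k) p < \<delta> / 3) sequentially"
    using trapped[of "\<delta> / 3"] \<open>\<delta> > 0\<close> by auto
  have "x \<longlonglongrightarrow> p"
  proof (rule tendstoI)
    fix e :: real
    assume "e > 0"
    with \<open>\<delta> > 0\<close> have "min e (\<delta> / 3) > 0" "3 * min e (\<delta> / 3) \<le> \<delta>"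
      by auto
    then obtain q where "q \<in> C" and q: "eventually (\<lambda>k. dist (x k) q < min e (\<delta> / 3)) sequentially"
      using trapped by blast
    have "eventually (\<lambda>k. dist p q < \<delta>) sequentially"
      using p q
    proof eventually_elim
      case (elim k)
      have "dist p q \<le> dist (x k) p + dist (x k) q"
        by (rule dist_triangle3)
      with elim \<open>\<delta> > 0\<close> show ?case
        by simp
    qed
    then have "q = p"
      using sep \<open>p \<in> C\<close> \<open>q \<in> C\<close> by force
    with q show "eventually (\<lambda>k. dist (x k) p < e) sequentially"
      by (auto elim: eventually_mono)
  qed
  then show ?thesis ..
qed

lemma steps_tendsto_zero_if_sufficient_decrease:
  fixes x :: "nat \<Rightarrow> 'a::real_normed_vector" and E :: "'a \<Rightarrow> real"
  assumes "c > 0"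
    and decrease: "\<And>k. E (x (Suc k)) + c * (norm (x (Suc k) - x k))\<^sup>2 \<le> E (x k)"
    and lower: "\<And>y. L \<le> E y"
  shows "(\<lambda>k. x (Suc k) - x k) \<longlonglongrightarrow> 0"
proof -
  have telescope: "(\<Sum>k<N. c * (norm (x (Suc k) - x k))\<^sup>2) \<le> E (x 0) - E (x N)" for N
  proof (induction N)
    case (Suc N)
    then show ?case
      using decrease[of N] by simp
  qed simp
  have "summable (\<lambda>k. c * (norm (x (Suc k) - x k))\<^sup>2)"
  proof (rule summableI_nonneg_bounded)
    show "0 \<le> c * (norm (x (Suc k) - x k))\<^sup>2" for k
      using \<open>c > 0\<close> by simp
    show "(\<Sum>k<N. c * (norm (x (Suc k) - x k))\<^sup>2) \<le> E (x 0) - L" for N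
      using telescope[of N] lower[of "x N"] by linarith
  qed
  then have "(\<lambda>k. c * (norm (x (Suc k) - x k))\<^sup>2) \<longlonglongrightarrow> 0"
    by (rule summable_LIMSEQ_zero)
  then have "(\<lambda>k. sqrt ((1 / c) * (c * (norm (x (Suc k) - x k))\<^sup>2))) \<longlonglongrightarrow> sqrt ((1 / c) * 0)"
    by (intro tendsto_real_sqrt tendsto_mult_left)
  then show ?thesis
    using \<open>c > 0\<close> by (simp add: tendsto_norm_zero_iff)
qed

section \<open>Convergence of the iteration\<close>

lemma cube_root_iteration_converges:
  fixes A :: "real^'n^'n" and x :: "nat \<Rightarrow> real^'n"
  assumes symA: "transpose A = A" and "\<beta> > 0" and "lambda_min A > 0"
    and step: "\<And>k i. \<beta> * (x (Suc k) $ i) ^ 3 = (A *v x k) $ i"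
  shows "\<exists>p. x \<longlonglongrightarrow> p \<and> (\<forall>i. \<beta> * (p $ i) ^ 3 = (A *v p) $ i)"
proof -
  let ?E = "quartic_energy \<beta> A"
  define C where "C = {p. \<forall>i. \<beta> * (p $ i) ^ 3 = (A *v p) $ i}"
  have decrease: "?E (x (Suc k)) + lambda_min A / 2 * (norm (x (Suc k) - x k))\<^sup>2 \<le> ?E (x k)" for k
    using quartic_energy_descent[OF symA \<open>\<beta> > 0\<close> step[of k]]
      lambda_min_le_quadratic_form[OF symA, of "x (Suc k) - x k"]
    by linarith
  obtain L where "\<And>y. L \<le> ?E y"
    using quartic_energy_bounded_below[OF \<open>\<beta> > 0\<close>] by blast
  then have steps: "(\<lambda>k. x (Suc k) - x k) \<longlonglongrightarrow> 0"
    using \<open>lambda_min A > 0\<close> decrease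
    by (intro steps_tendsto_zero_if_sufficient_decrease[where E = ?E and c = "lambda_min A / 2"]) auto
  have "?E (x (Suc k)) \<le> ?E (x k)" for k
  proof -
    have "0 \<le> lambda_min A / 2 * (norm (x (Suc k) - x k))\<^sup>2"
      using \<open>lambda_min A > 0\<close> by simp
    with decrease[of k] show ?thesis
      by linarith
  qed
  then have "decseq (\<lambda>k. ?E (x k))"
    by (rule decseq_SucI)
  then have "range x \<subseteq> {y. ?E y \<le> ?E (x 0)}"
    by (auto simp: decseq_def)
  then have bounded: "bounded (range x)"
    using bounded_quartic_energy_sublevel[OF \<open>\<beta> > 0\<close>] by (rule bounded_subset[rotated])
  have limit_fixed: "p \<in> C" if "strict_mono r" and "(x \<circ> r) \<longlonglongrightarrow> p" for r p
  proof -
    have "(\<lambda>j. x (Suc (r j))) \<longlonglongrightarrow> p"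
      using tendsto_add[OF \<open>(x \<circ> r) \<longlonglongrightarrow> p\<close> LIMSEQ_subseq_LIMSEQ[OF steps \<open>strict_mono r\<close>]]
      by (simp add: o_def)
    then have "(\<lambda>j. \<beta> * (x (Suc (r j)) $ i) ^ 3) \<longlonglongrightarrow> \<beta> * (p $ i) ^ 3" for i
      by (intro tendsto_intros)
    moreover have "(\<lambda>j. \<beta> * (x (Suc (r j)) $ i) ^ 3) \<longlonglongrightarrow> (A *v p) $ i" for i
      unfolding step using \<open>(x \<circ> r) \<longlonglongrightarrow> p\<close>
      by (intro tendsto_vec_nth) (simp add: o_def bounded_linear.tendsto[OF matrix_vector_mul_bounded_linear])
    ultimately show ?thesis
      unfolding C_def using LIMSEQ_unique by blast
  qed
  have "finite C"
    unfolding C_def using \<open>\<beta> > 0\<close> by (intro finite_cubic_variety) simp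
  then obtain p where "x \<longlonglongrightarrow> p"
    using convergent_if_finite_limit_points[OF bounded steps] limit_fixed by blast
  moreover have "p \<in> C"
    using limit_fixed[of id p] \<open>x \<longlonglongrightarrow> p\<close> by (simp add: strict_mono_def)
  ultimately show ?thesis
    unfolding C_def by blast
qed

lemma doch_step_cube:
  assumes "\<beta> > 0"
  shows "\<beta> * (doch_step J \<alpha> \<beta> x $ i) ^ 3 = ((J + \<alpha> *\<^sub>R mat 1) *v x) $ i"
  using assms by (simp add: doch_step_def odd_real_root_pow)

theorem theoremS2:
  fixes J :: "real^'n^'n" and \<alpha> \<beta> :: real and x :: "nat \<Rightarrow> real^'n"
  assumes symJ: "transpose J = J"
    and diag0: "\<forall>i. J $ i $ i = 0"
    and alpha_pos: "\<alpha> > 0" and beta_pos: "\<beta> > 0"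
    and lmin: "lambda_min (J + \<alpha> *\<^sub>R mat 1) > 0"
    and iter: "\<forall>k. x (Suc k) = doch_step J \<alpha> \<beta> (x k)"
  shows "\<exists>xs. x \<longlonglongrightarrow> xs \<and> critical_point (Hfun J \<alpha> \<beta>) xs"
proof -
  have sym: "transpose (J + \<alpha> *\<^sub>R mat 1) = J + \<alpha> *\<^sub>R mat 1"
    by (simp add: transpose_add transpose_scalar symJ)
  have "\<beta> * (x (Suc k) $ i) ^ 3 = ((J + \<alpha> *\<^sub>R mat 1) *v x k) $ i" for k i
    using iter doch_step_cube[OF beta_pos] by simp
  then obtain p where "x \<longlonglongrightarrow> p"
    and fixed: "\<forall>i. \<beta> * (p $ i) ^ 3 = ((J + \<alpha> *\<^sub>R mat 1) *v p) $ i"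
    using cube_root_iteration_converges[OF sym beta_pos lmin] by blast
  moreover have "critical_point (Hfun J \<alpha> \<beta>) p"
    unfolding Hfun_eq_quartic_energy using sym fixed by (intro critical_point_quartic_energy) auto
  ultimately show ?thesis
    by blast
qed

end
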